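(* Let $f:\Delta^2\to\mathbb R$ be a smooth, $T\ltimes\mathcal S_2$-invariant, strictly plurisubharmonic function and let $r,s\in\mathbb R$. Let $\tilde f:\mathbb R^2\to\mathbb R$, $\tilde f(a_1,a_2)=f(\tanh a_1,\tanh a_2)$ (a $W_{\mathbb R^2}$-invariant function), and for $\sinh^2a_1\neq\sinh^2a_2$ define $$G_{\tilde f}(a_1,a_2)=\frac{r\sinh(2a_1)\frac{\partial\tilde f}{\partial a_1}(a_1,a_2)-s\sinh(2a_2)\frac{\partial\tilde f}{\partial a_2}(a_1,a_2)}{\sinh^2a_1-\sinh^2a_2}.$$ Then: (i) $\frac{\partial\tilde f}{\partial a_1}(a_1,a_2)>0$ whenever $a_1>0$ and $<0$ whenever $a_1<0$; in particular $\frac{\partial\tilde f}{\partial a_1}(0,a_2)=0$ for all $a_2\in\mathbb R$. (ii) $\frac{\partial\tilde f}{\partial a_2}(a_1,a_2)=\frac{\partial\tilde f}{\partial a_1}(a_2,a_1)$; in particular $\frac{\partial\tilde f}{\partial a_2}(a_1,0)=0$ for all $a_1$. (iii) If $G_{\tilde f}$ extends continuously to a strictly positive function on $\mathbb R^2$, then $r=s>0$; in particular $G_{\tilde f}$ is then $W_{\mathbb R^2}$-invariant.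
   Context: $\Delta$ is the unit disc in $\mathbb C$ and $\Delta^2$ the unit bidisc. $T=(S^1)^2$ acts on $\Delta^2$ by coordinatewise rotations and $\mathcal S_2$ by permutation of the two coordinates. $W_{\mathbb R^2}=(\mathbb Z_2)^2\rtimes\mathcal S_2$ acts on $\mathbb R^2$ by signed permutations of the coordinates. *)

theory Defs
  imports "HOL-Analysis.Analysis"
begin

definition bidisc :: "(complex \<times> complex) set" where
  "bidisc = {(z, w). norm z < 1 \<and> norm w < 1}"

fun dderiv :: "'a::real_normed_vector list \<Rightarrow> ('a \<Rightarrow> real) \<Rightarrow> ('a \<Rightarrow> real)" where
  "dderiv [] f = f"
| "dderiv (v # vs) f = (\<lambda>x. frechet_derivative (dderiv vs f) (at x) v)"

definition smooth_on :: "('a::real_normed_vector \<Rightarrow> real) \<Rightarrow> 'a set \<Rightarrow> bool" where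
  "smooth_on f S \<longleftrightarrow> (\<forall>vs. dderiv vs f differentiable_on S)"

definition dir_x :: "nat \<Rightarrow> complex \<times> complex" where
  "dir_x j = (if j = 0 then (1, 0) else (0, 1))"
definition dir_y :: "nat \<Rightarrow> complex \<times> complex" where
  "dir_y j = (if j = 0 then (\<i>, 0) else (0, \<i>))"

text \<open>Complex mixed second derivative d^2 f / (dz_j d conj(z_k)) at p
  = 1/4 (f_{x_j x_k} + f_{y_j y_k} + i (f_{x_j y_k} - f_{y_j x_k})).\<close>
definition levi_coeff :: "(complex \<times> complex \<Rightarrow> real) \<Rightarrow> complex \<times> complex \<Rightarrow> nat \<Rightarrow> nat \<Rightarrow> complex" where
  "levi_coeff f p j k =
     (complex_of_real (dderiv [dir_x j, dir_x k] f p + dderiv [dir_y j, dir_y k] f p)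
      + \<i> * complex_of_real (dderiv [dir_x j, dir_y k] f p - dderiv [dir_y j, dir_x k] f p)) / 4"

definition levi_form :: "(complex \<times> complex \<Rightarrow> real) \<Rightarrow> complex \<times> complex \<Rightarrow> complex \<times> complex \<Rightarrow> complex" where
  "levi_form f p xi =
     (\<Sum>j<2. \<Sum>k<2. levi_coeff f p j k * (if j = 0 then fst xi else snd xi)
                       * cnj (if k = 0 then fst xi else snd xi))"

text \<open>Strictly plurisubharmonic (for smooth f): positive definite Levi form at every point of S.\<close>
definition strictly_psh_on :: "(complex \<times> complex \<Rightarrow> real) \<Rightarrow> (complex \<times> complex) set \<Rightarrow> bool" where
  "strictly_psh_on f S \<longleftrightarrow>
     (\<forall>p\<in>S. \<forall>xi. xi \<noteq> 0 \<longrightarrow> Re (levi_form f p xi) > 0)"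

definition torus_swap_invariant :: "(complex \<times> complex \<Rightarrow> real) \<Rightarrow> bool" where
  "torus_swap_invariant f \<longleftrightarrow>
     (\<forall>z w. (z, w) \<in> bidisc \<longrightarrow>
        (\<forall>t1 t2::real. f (cis t1 * z, cis t2 * w) = f (z, w)) \<and> f (w, z) = f (z, w))"

definition ftilde :: "(complex \<times> complex \<Rightarrow> real) \<Rightarrow> real \<Rightarrow> real \<Rightarrow> real" where
  "ftilde f a1 a2 = f (complex_of_real (tanh a1), complex_of_real (tanh a2))"

definition D1 :: "(real \<Rightarrow> real \<Rightarrow> real) \<Rightarrow> real \<Rightarrow> real \<Rightarrow> real" where
  "D1 g a1 a2 = deriv (\<lambda>t. g t a2) a1"
definition D2 :: "(real \<Rightarrow> real \<Rightarrow> real) \<Rightarrow> real \<Rightarrow> real \<Rightarrow> real" where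
  "D2 g a1 a2 = deriv (\<lambda>t. g a1 t) a2"

text \<open>G_{ftilde}, meaningful where sinh^2 a1 \<noteq> sinh^2 a2.\<close>
definition Gfun :: "real \<Rightarrow> real \<Rightarrow> (complex \<times> complex \<Rightarrow> real) \<Rightarrow> real \<Rightarrow> real \<Rightarrow> real" where
  "Gfun r s f a1 a2 =
     (r * sinh (2 * a1) * D1 (ftilde f) a1 a2 - s * sinh (2 * a2) * D2 (ftilde f) a1 a2)
     / ((sinh a1)\<^sup>2 - (sinh a2)\<^sup>2)"

end

theory Submission imports Defs begin

text \<open>Rotation invariance in the first variable says that the angular derivative of f
  vanishes: x f_y = t f_x at (x + i t, c). Differentiating in t at t = 0 gives f_yy = f_x / x
  on the positive real axis, so (x f_x)' = f_x + x f_xx = x (f_xx + f_yy), which is positive by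
  strict plurisubharmonicity; the mean value theorem on [0, x] then gives f_x > 0. The
  substitution x = tanh a preserves the sign, the rotation by pi makes the first partial of
  the reduced function odd, and the swap exchanges the two partials. A continuous extension of
  G across the diagonal forces its numerator to vanish there, which at (1, 1) reads
  (r - s) sinh 2 D1(1, 1) = 0; positivity of G at (1, 0) then gives r > 0.\<close>

lemma has_field_derivative_along_path:
  assumes "(f has_derivative L) (at (\<gamma> t))" "(\<gamma> has_vector_derivative v) (at t)"
  shows "((\<lambda>s. f (\<gamma> s)) has_real_derivative L v) (at t)"
proof -
  have "((f \<circ> \<gamma>) has_derivative (L \<circ> (\<lambda>x. x *\<^sub>R v))) (at t)"
    using diff_chain_at assms(2)[unfolded has_vector_derivative_def] assms(1) by blast
  moreover have "linear L" using has_derivative_linear assms(1) by blast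
  then have "L \<circ> (\<lambda>x. x *\<^sub>R v) = (\<lambda>x. L v * x)"
    by (auto simp: linear_scale mult.commute)
  ultimately show ?thesis by (simp add: has_field_derivative_def o_def)
qed

lemma deriv_at_neg_of_even:
  fixes g :: "real \<Rightarrow> real"
  assumes even: "\<And>x. g (-x) = g x" and "(g has_real_derivative D) (at a)"
  shows "deriv g (-a) = - D"
proof -
  have "((\<lambda>x. g (-x)) has_real_derivative - D) (at (-a))"
    using assms(2) DERIV_mirror[where f=g and x="-a" and y=D] by simp
  then show ?thesis using even by (simp add: DERIV_imp_deriv)
qed

lemma numerator_vanishes_at_zero_of_denominator:
  fixes h N Den :: "'a::{perfect_space, t2_space} \<Rightarrow> 'b::real_normed_algebra"
  assumes "isCont h a" "isCont N a" "isCont Den a" "Den a = 0"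
    and "\<forall>\<^sub>F t in at a. h t * Den t = N t"
  shows "N a = 0"
proof -
  have "((\<lambda>t. h t * Den t) \<longlongrightarrow> h a * Den a) (at a)"
    using assms(1,3) by (intro tendsto_mult) (simp_all add: isCont_def)
  then have "(N \<longlongrightarrow> 0) (at a)"
    using Lim_transform_eventually[OF _ assms(5)] assms(4) by simp
  moreover have "(N \<longlongrightarrow> N a) (at a)" using assms(2) by (simp add: isCont_def)
  ultimately show ?thesis using tendsto_unique[OF at_neq_bot] by fastforce
qed

lemma has_vector_derivative_rotation:
  "((\<lambda>t. cis t * z) has_vector_derivative (\<i> * cis t * z)) (at t)"
proof -
  have "(cis has_derivative (\<lambda>s. s *\<^sub>R (\<i> * cis t))) (at t)"
    using has_derivative_cis[OF has_derivative_ident] by simp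
  then have "(cis has_vector_derivative (\<i> * cis t)) (at t)"
    by (simp add: has_vector_derivative_def)
  from has_vector_derivative_mult_left[OF this, of z] show ?thesis by simp
qed

lemma has_vector_derivative_horizontal_line:
  "((\<lambda>s::real. (complex_of_real s, c)) has_vector_derivative (1, 0)) (at t)"
  using has_vector_derivative_Pair[OF has_vector_derivative_of_real[OF DERIV_ident]
      has_vector_derivative_const] by simp

lemma has_vector_derivative_vertical_line:
  "((\<lambda>s::real. (complex_of_real x + \<i> * complex_of_real s, c)) has_vector_derivative (\<i>, 0)) (at t)"
proof -
  have "((\<lambda>s::real. \<i> * complex_of_real s) has_vector_derivative \<i>) (at t)"
    using has_vector_derivative_mult_right[OF has_vector_derivative_of_real[OF DERIV_ident], of \<i>]
    by simp
  then have "((\<lambda>s::real. complex_of_real x + \<i> * complex_of_real s) has_vector_derivative \<i>) (at t)"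
    using has_vector_derivative_add[OF has_vector_derivative_const] by fastforce
  then show ?thesis using has_vector_derivative_Pair[OF _ has_vector_derivative_const] by blast
qed

lemma open_bidisc: "open bidisc"
proof -
  have "bidisc = ball (0::complex) 1 \<times> ball (0::complex) 1" by (auto simp: bidisc_def)
  then show ?thesis by (metis open_Times open_ball)
qed

lemma tanh_pair_in_bidisc: "(complex_of_real (tanh a), complex_of_real (tanh b)) \<in> bidisc"
  using tanh_real_bounds[of a] tanh_real_bounds[of b] by (simp add: bidisc_def abs_less_iff)

lemma smooth_on_has_derivative:
  assumes "smooth_on f S" "open S" "q \<in> S"
  shows "(dderiv vs f has_derivative frechet_derivative (dderiv vs f) (at q)) (at q)"
proof -
  have "dderiv vs f differentiable_on S" using assms(1) by (simp add: smooth_on_def)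
  then have "dderiv vs f differentiable at q"
    using differentiable_on_eq_differentiable_at[OF assms(2)] assms(3) by blast
  then show ?thesis using frechet_derivative_works by blast
qed

lemma smooth_on_bidisc_has_derivative:
  assumes "smooth_on f bidisc" "q \<in> bidisc"
  shows "(f has_derivative frechet_derivative f (at q)) (at q)"
  using smooth_on_has_derivative[OF assms(1) open_bidisc assms(2), of "[]"] by simp

lemma dderiv_dir_x0: "dderiv [dir_x 0] f q = frechet_derivative f (at q) (1, 0)"
  by (simp add: dir_x_def)

lemma dderiv_dir_y0: "dderiv [dir_y 0] f q = frechet_derivative f (at q) (\<i>, 0)"
  by (simp add: dir_y_def)

lemma torus_swap_invariant_neg_left:
  assumes "torus_swap_invariant f" "(z, w) \<in> bidisc"
  shows "f (- z, w) = f (z, w)"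
proof -
  have "f (cis pi * z, cis 0 * w) = f (z, w)"
    using assms unfolding torus_swap_invariant_def by blast
  then show ?thesis by simp
qed

lemma frechet_derivative_rotation_vanishes:
  assumes sm: "smooth_on f bidisc" and inv: "torus_swap_invariant f" and q: "(z, c) \<in> bidisc"
  shows "frechet_derivative f (at (z, c)) (\<i> * z, 0) = 0"
proof -
  let ?g = "\<lambda>t::real. (cis t * z, c)"
  have vd: "(?g has_vector_derivative (\<i> * z, 0)) (at 0)"
    using has_vector_derivative_Pair[OF has_vector_derivative_rotation[of z 0]
        has_vector_derivative_const[of c]] by simp
  have "(f has_derivative frechet_derivative f (at (z, c))) (at (?g 0))"
    using smooth_on_bidisc_has_derivative[OF sm q] by simp
  from has_field_derivative_along_path[OF this vd]
  have "((\<lambda>s. f (?g s)) has_real_derivative frechet_derivative f (at (z, c)) (\<i> * z, 0)) (at 0)" .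
  moreover have "f (?g s) = f (z, c)" for s
  proof -
    have "f (cis s * z, cis 0 * c) = f (z, c)"
      using inv q unfolding torus_swap_invariant_def by blast
    then show ?thesis by simp
  qed
  then have "((\<lambda>s. f (?g s)) has_real_derivative 0) (at 0)" by simp
  ultimately show ?thesis using DERIV_unique by blast
qed

lemma y_derivative_eq:
  assumes sm: "smooth_on f bidisc" and inv: "torus_swap_invariant f"
    and q: "(complex_of_real x + \<i> * complex_of_real t, c) \<in> bidisc"
  shows "x * dderiv [dir_y 0] f (complex_of_real x + \<i> * complex_of_real t, c)
       = t * dderiv [dir_x 0] f (complex_of_real x + \<i> * complex_of_real t, c)"
proof -
  let ?z = "complex_of_real x + \<i> * complex_of_real t"
  let ?L = "frechet_derivative f (at (?z, c))"
  have lin: "linear ?L" using has_derivative_linear smooth_on_bidisc_has_derivative[OF sm q] by blast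
  have "(\<i> * ?z, 0::complex) = x *\<^sub>R (\<i>, 0) + (-t) *\<^sub>R (1, 0)"
    by (simp add: complex_eq_iff scaleR_conv_of_real algebra_simps)
  then have "?L (\<i> * ?z, 0) = ?L (x *\<^sub>R (\<i>, 0) + (-t) *\<^sub>R (1, 0))" by (simp only:)
  also have "\<dots> = x * ?L (\<i>, 0) - t * ?L (1, 0)"
    unfolding linear_add[OF lin] linear_scale[OF lin] by simp
  finally have "?L (\<i> * ?z, 0) = x * ?L (\<i>, 0) - t * ?L (1, 0)" .
  then show ?thesis
    using frechet_derivative_rotation_vanishes[OF sm inv q]
    unfolding dderiv_dir_x0 dderiv_dir_y0 by simp
qed

lemma second_y_derivative_on_real_axis:
  assumes sm: "smooth_on f bidisc" and inv: "torus_swap_invariant f"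
    and x: "0 < x" "x < 1" and c: "norm c < 1"
  shows "frechet_derivative (dderiv [dir_y 0] f) (at (complex_of_real x, c)) (\<i>, 0)
       = dderiv [dir_x 0] f (complex_of_real x, c) / x"
proof -
  let ?b = "\<lambda>s::real. (complex_of_real x + \<i> * complex_of_real s, c)"
  let ?fy = "dderiv [dir_y 0] f" and ?fx = "dderiv [dir_x 0] f"
  have inS: "?b s \<in> bidisc" if "s \<in> ball 0 (1 - x)" for s
  proof -
    have "norm (complex_of_real x + \<i> * complex_of_real s) \<le> x + \<bar>s\<bar>"
      using norm_triangle_ineq[of "complex_of_real x" "\<i> * complex_of_real s"] x
      by (simp add: norm_mult)
    also have "\<dots> < 1" using that by (simp add: dist_real_def)
    finally show ?thesis using c by (simp add: bidisc_def)
  qed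
  have p0: "?b 0 \<in> bidisc" using inS[of 0] x by simp
  have path: "((\<lambda>s. dderiv vs f (?b s)) has_real_derivative
                frechet_derivative (dderiv vs f) (at (?b 0)) (\<i>, 0)) (at 0)" for vs
    by (rule has_field_derivative_along_path[OF smooth_on_has_derivative[OF sm open_bidisc p0]
          has_vector_derivative_vertical_line])
  have d: "((\<lambda>s. s * ?fx (?b s) / x) has_real_derivative ?fx (?b 0) / x) (at 0)"
    using DERIV_cdivide[OF DERIV_mult[OF DERIV_ident path[of "[dir_x 0]"]], of x] by simp
  have eq: "s * ?fx (?b s) / x = ?fy (?b s)" if "s \<in> ball 0 (1 - x)" for s
    using y_derivative_eq[OF sm inv inS[OF that]] x by (simp add: field_simps)
  have "((\<lambda>s. ?fy (?b s)) has_real_derivative ?fx (?b 0) / x) (at 0)"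
    by (rule has_field_derivative_transform_within_open[OF d open_ball[of 0 "1 - x"] _ eq])
       (use x in simp)
  with path[of "[dir_y 0]"] show ?thesis using DERIV_unique by fastforce
qed

lemma strictly_psh_on_first_laplacian_pos:
  assumes "strictly_psh_on f S" "p \<in> S"
  shows "frechet_derivative (dderiv [dir_x 0] f) (at p) (1, 0)
       + frechet_derivative (dderiv [dir_y 0] f) (at p) (\<i>, 0) > 0"
proof -
  have "(1::complex, 0::complex) \<noteq> 0" by (simp add: zero_prod_def)
  then have "Re (levi_form f p (1, 0)) > 0" using assms unfolding strictly_psh_on_def by blast
  moreover have "levi_form f p (1, 0) = levi_coeff f p 0 0"
    by (simp add: levi_form_def numeral_2_eq_2 lessThan_Suc)
  moreover have "Re (levi_coeff f p 0 0)
      = (dderiv [dir_x 0, dir_x 0] f p + dderiv [dir_y 0, dir_y 0] f p) / 4"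
    by (simp only: levi_coeff_def) simp
  moreover have "dderiv [dir_x 0, dir_x 0] f p = frechet_derivative (dderiv [dir_x 0] f) (at p) (1, 0)"
    by (simp only: dderiv.simps(2)[of "dir_x 0" "[dir_x 0]"]) (simp add: dir_x_def)
  moreover have "dderiv [dir_y 0, dir_y 0] f p = frechet_derivative (dderiv [dir_y 0] f) (at p) (\<i>, 0)"
    by (simp only: dderiv.simps(2)[of "dir_y 0" "[dir_y 0]"]) (simp add: dir_y_def)
  ultimately show ?thesis by simp
qed

lemma x_derivative_pos_on_positive_axis:
  assumes sm: "smooth_on f bidisc" and inv: "torus_swap_invariant f"
    and psh: "strictly_psh_on f bidisc" and x: "0 < x" "x < 1" and c: "norm c < 1"
  shows "dderiv [dir_x 0] f (complex_of_real x, c) > 0"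
proof -
  let ?fx = "dderiv [dir_x 0] f" and ?fy = "dderiv [dir_y 0] f"
  define V where "V t = ?fx (complex_of_real t, c)" for t
  define W where "W t = frechet_derivative ?fx (at (complex_of_real t, c)) (1, 0)" for t
  have dV: "(V has_real_derivative W t) (at t)" if "\<bar>t\<bar> < 1" for t
  proof -
    have "(complex_of_real t, c) \<in> bidisc" using that c by (simp add: bidisc_def)
    from has_field_derivative_along_path[OF smooth_on_has_derivative[OF sm open_bidisc this]
        has_vector_derivative_horizontal_line]
    show ?thesis unfolding V_def W_def .
  qed
  have "((\<lambda>t. t * V t) has_real_derivative (V t + t * W t)) (at t)" if "0 \<le> t" "t \<le> x" for t
    using DERIV_mult[OF DERIV_ident dV[of t]] that x by (simp add: mult.commute)
  from MVT2[OF x(1) this] obtain z where z: "0 < z" "z < x" "x * V x = x * (V z + z * W z)"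
    by auto
  have pz: "(complex_of_real z, c) \<in> bidisc" using z x c by (simp add: bidisc_def)
  have "V z = z * frechet_derivative ?fy (at (complex_of_real z, c)) (\<i>, 0)"
    using second_y_derivative_on_real_axis[OF sm inv z(1) _ c] z x unfolding V_def by simp
  then have "V z + z * W z = z * (W z + frechet_derivative ?fy (at (complex_of_real z, c)) (\<i>, 0))"
    by (simp add: algebra_simps)
  moreover have "W z + frechet_derivative ?fy (at (complex_of_real z, c)) (\<i>, 0) > 0"
    using strictly_psh_on_first_laplacian_pos[OF psh pz] unfolding W_def .
  ultimately have "x * V x > 0" using z by simp
  then show ?thesis using x unfolding V_def by (simp add: zero_less_mult_iff)
qed

lemma ftilde_swap:
  assumes "torus_swap_invariant f"
  shows "ftilde f a b = ftilde f b a"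
  using assms tanh_pair_in_bidisc[of b a] unfolding torus_swap_invariant_def ftilde_def by auto

lemma ftilde_neg_left:
  assumes "torus_swap_invariant f"
  shows "ftilde f (-a) b = ftilde f a b"
  using torus_swap_invariant_neg_left[OF assms tanh_pair_in_bidisc[of a b]]
  unfolding ftilde_def by simp

lemma ftilde_neg_right:
  assumes "torus_swap_invariant f"
  shows "ftilde f a (-b) = ftilde f a b"
  using ftilde_neg_left[OF assms] ftilde_swap[OF assms] by metis

lemma ftilde_has_D1:
  assumes sm: "smooth_on f bidisc"
  shows "((\<lambda>t. ftilde f t a2) has_real_derivative
           dderiv [dir_x 0] f (complex_of_real (tanh a1), complex_of_real (tanh a2))
           * (1 - tanh a1 ^ 2)) (at a1)"
proof -
  let ?p = "(complex_of_real (tanh a1), complex_of_real (tanh a2))"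
  let ?L = "frechet_derivative f (at ?p)"
  have "(tanh has_real_derivative 1 - tanh a1 ^ 2) (at a1)"
    by (auto intro!: derivative_eq_intros)
  from has_vector_derivative_Pair[OF has_vector_derivative_of_real[OF this] has_vector_derivative_const]
  have "((\<lambda>t. (complex_of_real (tanh t), complex_of_real (tanh a2))) has_vector_derivative
      (1 - tanh a1 ^ 2) *\<^sub>R (1, 0)) (at a1)"
    by (simp add: scaleR_conv_of_real)
  moreover have "(f has_derivative ?L) (at ?p)"
    using smooth_on_bidisc_has_derivative[OF sm tanh_pair_in_bidisc] .
  ultimately have "((\<lambda>t. f (complex_of_real (tanh t), complex_of_real (tanh a2))) has_real_derivative
          ?L ((1 - tanh a1 ^ 2) *\<^sub>R (1, 0))) (at a1)"
    using has_field_derivative_along_path by fastforce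
  moreover have "linear ?L"
    using has_derivative_linear smooth_on_bidisc_has_derivative[OF sm tanh_pair_in_bidisc] by blast
  then have "?L ((1 - tanh a1 ^ 2) *\<^sub>R (1, 0)) = dderiv [dir_x 0] f ?p * (1 - tanh a1 ^ 2)"
    by (simp only: linear_scale dderiv_dir_x0) (simp add: mult.commute)
  ultimately show ?thesis unfolding ftilde_def by simp
qed

lemma D1_ftilde_eq:
  assumes "smooth_on f bidisc"
  shows "D1 (ftilde f) a1 a2
       = dderiv [dir_x 0] f (complex_of_real (tanh a1), complex_of_real (tanh a2)) * (1 - tanh a1 ^ 2)"
  unfolding D1_def using ftilde_has_D1[OF assms] by (rule DERIV_imp_deriv)

lemma D1_ftilde_pos:
  assumes "smooth_on f bidisc" "torus_swap_invariant f" "strictly_psh_on f bidisc" "a1 > 0"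
  shows "D1 (ftilde f) a1 a2 > 0"
proof -
  have "dderiv [dir_x 0] f (complex_of_real (tanh a1), complex_of_real (tanh a2)) > 0"
    using x_derivative_pos_on_positive_axis[OF assms(1-3)] assms(4) tanh_real_bounds[of a1]
      tanh_real_bounds[of a2] by (simp add: abs_less_iff)
  moreover have "1 - tanh a1 ^ 2 > 0"
    using tanh_real_bounds[of a1] by (simp add: abs_square_less_1 abs_less_iff)
  ultimately show ?thesis unfolding D1_ftilde_eq[OF assms(1)] by simp
qed

lemma D1_ftilde_neg_left:
  assumes "smooth_on f bidisc" "torus_swap_invariant f"
  shows "D1 (ftilde f) (-a1) a2 = - D1 (ftilde f) a1 a2"
  unfolding D1_def
  using deriv_at_neg_of_even[OF ftilde_neg_left[OF assms(2)] ftilde_has_D1[OF assms(1)]]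
    DERIV_imp_deriv[OF ftilde_has_D1[OF assms(1)]] by simp

lemma D1_ftilde_neg_right:
  assumes "torus_swap_invariant f"
  shows "D1 (ftilde f) a1 (-a2) = D1 (ftilde f) a1 a2"
  unfolding D1_def using ftilde_neg_right[OF assms] by simp

lemma D2_ftilde_eq_D1_swap:
  assumes "torus_swap_invariant f"
  shows "D2 (ftilde f) a1 a2 = D1 (ftilde f) a2 a1"
  unfolding D1_def D2_def using ftilde_swap[OF assms] by metis

lemma D2_ftilde_neg_left:
  assumes "torus_swap_invariant f"
  shows "D2 (ftilde f) (-a1) a2 = D2 (ftilde f) a1 a2"
proof -
  have "ftilde f (-a1) = ftilde f a1" using ftilde_neg_left[OF assms] by blast
  then show ?thesis unfolding D2_def by simp
qed

lemma D1_ftilde_continuous: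
  assumes sm: "smooth_on f bidisc"
  shows "isCont (\<lambda>t. D1 (ftilde f) t b) a" "isCont (\<lambda>t. D1 (ftilde f) b t) a"
proof -
  have fx: "isCont (dderiv [dir_x 0] f) q" if "q \<in> bidisc" for q
    using has_derivative_continuous[OF smooth_on_has_derivative[OF sm open_bidisc that]] .
  have "isCont (\<lambda>t. (complex_of_real (tanh t), complex_of_real (tanh b))) a"
    "isCont (\<lambda>t. (complex_of_real (tanh b), complex_of_real (tanh t))) a"
    by (intro continuous_intros; simp)+
  from this[THEN isCont_o2, OF fx[OF tanh_pair_in_bidisc]]
  show "isCont (\<lambda>t. D1 (ftilde f) t b) a" "isCont (\<lambda>t. D1 (ftilde f) b t) a"
    unfolding D1_ftilde_eq[OF sm] by (intro continuous_intros; simp)+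
qed

lemma Gfun_neg_left:
  assumes "smooth_on f bidisc" "torus_swap_invariant f"
  shows "Gfun r s f (-a1) a2 = Gfun r s f a1 a2"
  unfolding Gfun_def
  using D1_ftilde_neg_left[OF assms] D2_ftilde_neg_left[OF assms(2)] by simp

lemma Gfun_neg_right:
  assumes "smooth_on f bidisc" "torus_swap_invariant f"
  shows "Gfun r s f a1 (-a2) = Gfun r s f a1 a2"
  unfolding Gfun_def D2_ftilde_eq_D1_swap[OF assms(2)]
  using D1_ftilde_neg_left[OF assms] D1_ftilde_neg_right[OF assms(2)] by simp

lemma Gfun_swap:
  assumes "torus_swap_invariant f"
  shows "Gfun r r f a2 a1 = Gfun r r f a1 a2"
proof -
  have "r * sinh (2 * a2) * D1 (ftilde f) a2 a1 - r * sinh (2 * a1) * D2 (ftilde f) a2 a1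
      = - (r * sinh (2 * a1) * D1 (ftilde f) a1 a2 - r * sinh (2 * a2) * D2 (ftilde f) a1 a2)"
    unfolding D2_ftilde_eq_D1_swap[OF assms] by simp
  moreover have "(sinh a2)\<^sup>2 - (sinh a1)\<^sup>2 = - ((sinh a1)\<^sup>2 - (sinh a2)\<^sup>2)" by simp
  ultimately show ?thesis unfolding Gfun_def by (metis minus_divide_divide)
qed

lemma Gfun_continuous_extension_imp_eq:
  assumes sm: "smooth_on f bidisc" and inv: "torus_swap_invariant f"
    and psh: "strictly_psh_on f bidisc" and g: "continuous_on UNIV g"
    and ext: "\<forall>a1 a2. (sinh a1)\<^sup>2 \<noteq> (sinh a2)\<^sup>2 \<longrightarrow> g (a1, a2) = Gfun r s f a1 a2"
  shows "r = s"
proof -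
  define N where "N t = r * sinh (2 * t) * D1 (ftilde f) t 1 - s * sinh 2 * D1 (ftilde f) 1 t" for t
  have "\<forall>\<^sub>F t in at 1. g (t, 1) * ((sinh t)\<^sup>2 - (sinh 1)\<^sup>2) = N t"
    unfolding eventually_at
  proof (intro exI[of _ 1] conjI ballI impI)
    fix t :: real assume t: "t \<noteq> 1 \<and> dist t 1 < 1"
    then have "sinh t \<noteq> sinh 1" "sinh t > 0" "sinh (1::real) > 0"
      by (auto simp: dist_real_def abs_less_iff)
    then have "(sinh t)\<^sup>2 \<noteq> (sinh 1)\<^sup>2" using power2_eq_iff_nonneg by fastforce
    then show "g (t, 1) * ((sinh t)\<^sup>2 - (sinh 1)\<^sup>2) = N t"
      using ext unfolding Gfun_def N_def D2_ftilde_eq_D1_swap[OF inv] by simp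
  qed simp
  moreover have "isCont (\<lambda>t. g (t, 1)) 1"
  proof -
    have pair: "isCont (\<lambda>t::real. (t, 1::real)) 1" by (intro continuous_intros)
    have "isCont g (1, 1)" using g by (simp add: continuous_on_eq_continuous_at)
    then show ?thesis using isCont_o2[OF pair, of g] by simp
  qed
  moreover have "isCont N 1"
    unfolding N_def by (intro continuous_intros D1_ftilde_continuous[OF sm])
  ultimately have "N 1 = 0"
    by (intro numerator_vanishes_at_zero_of_denominator[where a=1 and N=N]) (simp_all add: continuous_intros)
  then have "(r - s) * sinh 2 * D1 (ftilde f) 1 1 = 0"
    unfolding N_def by (simp add: algebra_simps)
  moreover have "D1 (ftilde f) 1 1 > 0" using D1_ftilde_pos[OF sm inv psh] by simp
  ultimately show ?thesis by simp
qed

lemma Gfun_pos_imp_pos: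
  assumes "smooth_on f bidisc" "torus_swap_invariant f" "strictly_psh_on f bidisc"
    and "Gfun r s f 1 0 > 0"
  shows "r > 0"
proof -
  define c where "c = sinh 2 * D1 (ftilde f) 1 0 / (sinh 1)\<^sup>2"
  have "Gfun r s f 1 0 = r * c" unfolding Gfun_def c_def by simp
  moreover have "c > 0" using D1_ftilde_pos[OF assms(1-3)] unfolding c_def by simp
  ultimately show ?thesis using assms(4) zero_less_mult_pos2 by metis
qed

theorem lemma2p5:
  fixes f :: "complex \<times> complex \<Rightarrow> real" and r s :: real
  assumes "smooth_on f bidisc"
    and "torus_swap_invariant f"
    and "strictly_psh_on f bidisc"
  shows "(\<forall>a1 a2. (a1 > 0 \<longrightarrow> D1 (ftilde f) a1 a2 > 0) \<and> (a1 < 0 \<longrightarrow> D1 (ftilde f) a1 a2 < 0)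
                   \<and> D1 (ftilde f) 0 a2 = 0)
       \<and> (\<forall>a1 a2. D2 (ftilde f) a1 a2 = D1 (ftilde f) a2 a1 \<and> D2 (ftilde f) a1 0 = 0)
       \<and> ((\<exists>g :: real \<times> real \<Rightarrow> real. continuous_on UNIV g \<and> (\<forall>a. g a > 0)
              \<and> (\<forall>a1 a2. (sinh a1)\<^sup>2 \<noteq> (sinh a2)\<^sup>2 \<longrightarrow> g (a1, a2) = Gfun r s f a1 a2))
          \<longrightarrow> r = s \<and> r > 0
              \<and> (\<forall>a1 a2. (sinh a1)\<^sup>2 \<noteq> (sinh a2)\<^sup>2 \<longrightarrow>
                    Gfun r s f (-a1) a2 = Gfun r s f a1 a2 \<and> Gfun r s f a1 (-a2) = Gfun r s f a1 a2
                    \<and> Gfun r s f a2 a1 = Gfun r s f a1 a2))"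
proof -
  have D1_zero: "D1 (ftilde f) 0 a2 = 0" for a2
    using D1_ftilde_neg_left[OF assms(1,2), of 0 a2] by simp
  have D1_neg: "D1 (ftilde f) a1 a2 < 0" if "a1 < 0" for a1 a2
    using D1_ftilde_pos[OF assms, of "-a1" a2] D1_ftilde_neg_left[OF assms(1,2), of a1 a2] that
    by simp
  have G: "r = s \<and> r > 0" if "continuous_on UNIV g" "\<forall>a. g a > 0"
    "\<forall>a1 a2. (sinh a1)\<^sup>2 \<noteq> (sinh a2)\<^sup>2 \<longrightarrow> g (a1, a2) = Gfun r s f a1 a2" for g
  proof
    show "r = s" using Gfun_continuous_extension_imp_eq[OF assms that(1,3)] .
    have "g (1, 0) = Gfun r s f 1 0" using that(3) by simp
    then show "r > 0" using Gfun_pos_imp_pos[OF assms] that(2) by metis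
  qed
  show ?thesis
    using D1_ftilde_pos[OF assms] D1_neg D1_zero D2_ftilde_eq_D1_swap[OF assms(2)] G
      Gfun_neg_left[OF assms(1,2)] Gfun_neg_right[OF assms(1,2)] Gfun_swap[OF assms(2)]
    by (metis (no_types, lifting))
qed

end
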